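(* Let $m\ge n$, $B\in\mathbb R^{n\times m}$ of full row rank, $f,h$ convex and continuously differentiable with Lipschitz gradients, $\mathcal L(u,p)=f(u)-h(p)+(Bu,p)$ with saddle point $(u^*,p^* )$, and $\mathcal I_{\mathcal V},\mathcal I_{\mathcal Q}$ symmetric positive definite. Suppose $f\in\mathcal S^{1,1}_{\mu_{f,\mathcal I_{\mathcal V}},L_{f,\mathcal I_{\mathcal V}}}$ with respect to $\mathcal I_{\mathcal V}$ with $0<\mu_{f,\mathcal I_{\mathcal V}}\le L_{f,\mathcal I_{\mathcal V}}<2$. Let $(u_k,p_k)_{k\ge0}$ satisfy the implicit Euler scheme $$u_{k+1}=u_k+\alpha_k\mathcal G^u(u_{k+1},p_{k+1}),\qquad p_{k+1}=p_k+\alpha_k\mathcal G^p(u_{k+1},p_{k+1})$$ with step sizes $\alpha_k>0$. Then for every $\alpha_k>0$ and $k\ge0$, $$\mathcal E(u_{k+1},p_{k+1})\le\frac{1}{1+\alpha_k\mu}\mathcal E(u_k,p_k),$$ where $\mu=\min\{\mu_{\mathcal V},\mu_{\mathcal Q}\}$.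
   Context: For SPD $M$, $\|x\|_M=(Mx,x)^{1/2}$; $D_g(y,x)=g(y)-g(x)-(\nabla g(x),y-x)$; $g\in\mathcal S^{1,1}_{\mu_{g,M},L_{g,M}}$ w.r.t. $M$ means $\frac{\mu_{g,M}}2\|x-y\|_M^2\le D_g(y,x)\le\frac{L_{g,M}}2\|x-y\|_M^2$ for all $x,y$. A saddle point satisfies $\nabla f(u^* )+B^\top p^*=0$, $Bu^*=\nabla h(p^* )$. Define $e(u)=u-\mathcal I_{\mathcal V}^{-1}\nabla f(u)$, $h_B(p)=h(p)+\frac12(B\mathcal I_{\mathcal V}^{-1}B^\top p,p)$, $\mathcal G^u(u,p)=-\mathcal I_{\mathcal V}^{-1}(\nabla f(u)+B^\top p)$, $\mathcal G^p(u,p)=-\mathcal I_{\mathcal Q}^{-1}(\nabla h_B(p)-Be(u))$, and $\mathcal E(u,p)=\frac12\|u-u^*\|^2_{\mathcal I_{\mathcal V}}+\frac12\|p-p^*\|^2_{\mathcal I_{\mathcal Q}}$. Constants: $\mu_{\mathcal V}=\mu_{f,\mathcal I_{\mathcal V}}$, $\mu_{\mathcal Q}=(2-L_{f,\mathcal I_{\mathcal V}})\mu_{h_B,\mathcal I_{\mathcal Q}}$, where $\mu_{h_B,\mathcal I_{\mathcal Q}}$ is the strong convexity constant of $h_B$ with respect to $\mathcal I_{\mathcal Q}$. *)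

theory Defs
  imports "HOL-Analysis.Analysis"
begin

definition sq_normM :: "real^'n^'n \<Rightarrow> real^'n \<Rightarrow> real" where
  "sq_normM M x = (M *v x) \<bullet> x"

definition normM :: "real^'n^'n \<Rightarrow> real^'n \<Rightarrow> real" where
  "normM M x = sqrt (sq_normM M x)"

definition SPD :: "real^'n^'n \<Rightarrow> bool" where
  "SPD M \<longleftrightarrow> transpose M = M \<and> (\<forall>x. x \<noteq> 0 \<longrightarrow> (M *v x) \<bullet> x > 0)"

definition bregman :: "('n \<Rightarrow> real) \<Rightarrow> ('n \<Rightarrow> 'n::real_inner) \<Rightarrow> 'n \<Rightarrow> 'n \<Rightarrow> real" where
  "bregman g gg y x = g y - g x - gg x \<bullet> (y - x)"

definition in_S11 :: "(real^'n \<Rightarrow> real) \<Rightarrow> (real^'n \<Rightarrow> real^'n) \<Rightarrow> real^'n^'n \<Rightarrow> real \<Rightarrow> real \<Rightarrow> bool" where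
  "in_S11 g gg M mu L \<longleftrightarrow> (\<forall>x y. mu / 2 * (normM M (x - y))^2 \<le> bregman g gg y x
                                 \<and> bregman g gg y x \<le> L / 2 * (normM M (x - y))^2)"

definition strongly_convex_wrt :: "(real^'n \<Rightarrow> real) \<Rightarrow> (real^'n \<Rightarrow> real^'n) \<Rightarrow> real^'n^'n \<Rightarrow> real \<Rightarrow> bool" where
  "strongly_convex_wrt g gg M mu \<longleftrightarrow> (\<forall>x y. mu / 2 * (normM M (x - y))^2 \<le> bregman g gg y x)"

definition is_gradient :: "(real^'n \<Rightarrow> real) \<Rightarrow> (real^'n \<Rightarrow> real^'n) \<Rightarrow> bool" where
  "is_gradient g gg \<longleftrightarrow> (\<forall>x. (g has_derivative (\<lambda>v. gg x \<bullet> v)) (at x))"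

definition hB :: "(real^'n \<Rightarrow> real) \<Rightarrow> real^'m^'n \<Rightarrow> real^'m^'m \<Rightarrow> real^'n \<Rightarrow> real" where
  "hB h B IV p = h p + 1/2 * (((B ** matrix_inv IV ** transpose B) *v p) \<bullet> p)"

definition grad_hB :: "(real^'n \<Rightarrow> real^'n) \<Rightarrow> real^'m^'n \<Rightarrow> real^'m^'m \<Rightarrow> real^'n \<Rightarrow> real^'n" where
  "grad_hB gh B IV p = gh p + (B ** matrix_inv IV ** transpose B) *v p"

definition e_map :: "(real^'m \<Rightarrow> real^'m) \<Rightarrow> real^'m^'m \<Rightarrow> real^'m \<Rightarrow> real^'m" where
  "e_map gf IV u = u - matrix_inv IV *v gf u"

definition Gu :: "(real^'m \<Rightarrow> real^'m) \<Rightarrow> real^'m^'n \<Rightarrow> real^'m^'m \<Rightarrow> real^'m \<Rightarrow> real^'n \<Rightarrow> real^'m" where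
  "Gu gf B IV u p = - (matrix_inv IV *v (gf u + transpose B *v p))"

definition Gp :: "(real^'m \<Rightarrow> real^'m) \<Rightarrow> (real^'n \<Rightarrow> real^'n) \<Rightarrow> real^'m^'n \<Rightarrow> real^'m^'m \<Rightarrow> real^'n^'n
                   \<Rightarrow> real^'m \<Rightarrow> real^'n \<Rightarrow> real^'n" where
  "Gp gf gh B IV IQ u p = - (matrix_inv IQ *v (grad_hB gh B IV p - B *v e_map gf IV u))"

definition lyap :: "real^'m^'m \<Rightarrow> real^'n^'n \<Rightarrow> real^'m \<Rightarrow> real^'n \<Rightarrow> real^'m \<Rightarrow> real^'n \<Rightarrow> real" where
  "lyap IV IQ us ps u p = 1/2 * (normM IV (u - us))^2 + 1/2 * (normM IQ (p - ps))^2"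

end

theory Submission
  imports Defs
begin

(* Write x = u - u^*, y = p - p^*, w = B^T y, d = grad f u - grad f u^* and E = E(u, p), and let
   (.,.)_V and ||.||_V be the inner product and norm given by I_V^{-1}.  Testing the implicit step
   against the distance to the saddle point, ||a||_M^2 - ||b||_M^2 = 2 (M a, a - b) - ||a - b||_M^2
   gives E(k+1) - E(k) <= - alpha_k P(u_{k+1}, p_{k+1}), where P is the pairing of the residuals
   (grad f u + B^T p, grad h_B p - B e(u)) with (x, y).  After subtracting the saddle equations,
   P = (d, x) + (grad h p - grad h p^*, y) + ||w||_V^2 + (d, w)_V.  Young's inequality and the
   cocoercivity ||d||_V^2 <= L_f (d, x) absorb the cross term at the price of the factors 1/2 and
   1 - L_f/2, so P >= mu E as long as L_f < 2.  Hence (1 + alpha_k mu) E(k+1) <= E(k). *)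

(* keep transpose B *v y, the form in which B^T enters Gu and Gp, instead of y v* B *)
declare transpose_matrix_vector [simp del]

lemma invertible_matrix_inv:
  fixes A :: "'a::semiring_1^'n^'m"
  assumes "invertible A"
  shows "A ** matrix_inv A = mat 1" "matrix_inv A ** A = mat 1"
  using someI_ex[OF assms[unfolded invertible_def]] unfolding matrix_inv_def by auto

lemma inner_matrix_vector_transpose:
  "((A::real^'a^'b) *v x) \<bullet> y = x \<bullet> (transpose A *v y)"
  by (metis inner_commute dot_lmul_matrix transpose_matrix_vector)

lemma symmetric_matrix_inner_swap:
  "transpose (A::real^'n^'n) = A \<Longrightarrow> (A *v x) \<bullet> y = (A *v y) \<bullet> x"
  by (metis inner_matrix_vector_transpose inner_commute)

lemma SPD_symmetric: "SPD M \<Longrightarrow> transpose M = M"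
  unfolding SPD_def by simp

lemma SPD_invertible: "SPD M \<Longrightarrow> invertible M"
  unfolding SPD_def
  by (metis inner_zero_left less_irrefl matrix_left_invertible_ker invertible_left_inverse)

lemma SPD_matrix_inv_symmetric:
  assumes "SPD M"
  shows "transpose (matrix_inv M) = matrix_inv M"
proof -
  note inv = invertible_matrix_inv[OF SPD_invertible[OF assms]]
  have "transpose (matrix_inv M) = transpose (matrix_inv M) ** (M ** matrix_inv M)"
    using inv by simp
  also have "\<dots> = transpose (M ** matrix_inv M) ** matrix_inv M"
    by (simp add: matrix_mul_assoc matrix_transpose_mul SPD_symmetric[OF assms])
  finally show ?thesis
    using inv by simp
qed

lemma sq_normM_nonneg: "SPD M \<Longrightarrow> 0 \<le> sq_normM M v"
  unfolding SPD_def sq_normM_def by (cases "v = 0") (auto intro: less_imp_le)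

lemma normM_power2: "SPD M \<Longrightarrow> (normM M v)\<^sup>2 = sq_normM M v"
  unfolding normM_def by (simp add: sq_normM_nonneg)

lemma sq_normM_scaleR: "sq_normM M (c *\<^sub>R v) = c\<^sup>2 * sq_normM M v"
  unfolding sq_normM_def by (simp add: matrix_vector_mult_scaleR power2_eq_square)

lemma sq_normM_minus_commute: "sq_normM M (x - y) = sq_normM M (y - x)"
  using sq_normM_scaleR[of M "-1" "y - x"] by simp

lemma sq_normM_diff:
  assumes "transpose M = M"
  shows "sq_normM M a - sq_normM M b = 2 * ((M *v a) \<bullet> (a - b)) - sq_normM M (a - b)"
  using symmetric_matrix_inner_swap[OF assms, of b a]
  unfolding sq_normM_def
  by (simp add: matrix_vector_mult_diff_distrib inner_diff_left inner_diff_right)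

lemma SPD_matrix_inv_nonneg:
  assumes "SPD M"
  shows "0 \<le> (matrix_inv M *v v) \<bullet> v"
proof -
  have "M *v (matrix_inv M *v v) = v"
    by (simp add: matrix_vector_mul_assoc invertible_matrix_inv SPD_invertible[OF assms])
  then have "(matrix_inv M *v v) \<bullet> v = sq_normM M (matrix_inv M *v v)"
    unfolding sq_normM_def by (simp add: inner_commute)
  then show ?thesis
    using sq_normM_nonneg[OF assms] by simp
qed

lemma SPD_matrix_inv_Young:
  assumes "SPD M" and "0 < c"
  shows "- (c / 2 * ((matrix_inv M *v a) \<bullet> a)) - 1 / (2 * c) * ((matrix_inv M *v b) \<bullet> b)
           \<le> (matrix_inv M *v a) \<bullet> b"
proof -
  let ?q = "\<lambda>v. (matrix_inv M *v v) \<bullet> v"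
  have swap: "(matrix_inv M *v b) \<bullet> a = (matrix_inv M *v a) \<bullet> b"
    by (rule symmetric_matrix_inner_swap[OF SPD_matrix_inv_symmetric[OF assms(1)]])
  have "0 \<le> ?q (c *\<^sub>R a + b)"
    by (rule SPD_matrix_inv_nonneg[OF assms(1)])
  also have "\<dots> = c\<^sup>2 * ?q a + 2 * c * ((matrix_inv M *v a) \<bullet> b) + ?q b"
    using swap by (simp add: matrix_vector_right_distrib matrix_vector_mult_scaleR
        inner_add_left inner_add_right power2_eq_square algebra_simps)
  finally show ?thesis
    using assms(2) by (simp add: field_simps power2_eq_square)
qed

lemma bregman_symmetrized:
  "bregman g gg y x + bregman g gg x y = (gg y - gg x) \<bullet> (y - x)"
  unfolding bregman_def by (simp add: algebra_simps inner_diff_left inner_diff_right)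

lemma convex_on_line:
  fixes h :: "'a::real_vector \<Rightarrow> real"
  assumes "convex_on UNIV h"
  shows "convex_on UNIV (\<lambda>t::real. h (x + t *\<^sub>R v))"
proof (rule convex_onI)
  fix t s r :: real
  assume "0 < t" "t < 1"
  have "x + ((1 - t) *\<^sub>R s + t *\<^sub>R r) *\<^sub>R v = (1 - t) *\<^sub>R (x + s *\<^sub>R v) + t *\<^sub>R (x + r *\<^sub>R v)"
    by (simp add: algebra_simps)
  then show "h (x + ((1 - t) *\<^sub>R s + t *\<^sub>R r) *\<^sub>R v) \<le> (1 - t) * h (x + s *\<^sub>R v) + t * h (x + r *\<^sub>R v)"
    using convex_onD[OF assms, of t] \<open>0 < t\<close> \<open>t < 1\<close> by simp
qed simp

lemma bregman_nonneg_if_convex: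
  assumes "convex_on UNIV h" and "is_gradient h gh"
  shows "0 \<le> bregman h gh y x"
proof -
  have line: "((\<lambda>t. x + t *\<^sub>R (y - x)) has_derivative (\<lambda>t. t *\<^sub>R (y - x))) (at 0)"
    by (auto intro!: derivative_eq_intros)
  have "(h has_derivative (\<lambda>v. gh x \<bullet> v)) (at (x + 0 *\<^sub>R (y - x)))"
    using assms(2) unfolding is_gradient_def by simp
  from has_derivative_compose[OF line this]
  have "((\<lambda>t. h (x + t *\<^sub>R (y - x))) has_field_derivative gh x \<bullet> (y - x)) (at 0)"
    unfolding has_field_derivative_def by (simp add: mult.commute[of _ "gh x \<bullet> (y - x)"])
  then have "gh x \<bullet> (y - x) * (1 - 0) \<le> h (x + 1 *\<^sub>R (y - x)) - h (x + 0 *\<^sub>R (y - x))"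
    by (intro convex_on_imp_above_tangent[OF convex_on_line[OF assms(1)] connected_UNIV]) auto
  then show ?thesis
    unfolding bregman_def by simp
qed

lemma convex_gradient_monotone:
  assumes "convex_on UNIV h" and "is_gradient h gh"
  shows "0 \<le> (gh y - gh x) \<bullet> (y - x)"
  using bregman_nonneg_if_convex[OF assms, of x y] bregman_nonneg_if_convex[OF assms, of y x]
    bregman_symmetrized[of h gh y x] by linarith

lemma in_S11_strongly_convex_wrt:
  "in_S11 g gg M mu L \<Longrightarrow> strongly_convex_wrt g gg M mu"
  unfolding in_S11_def strongly_convex_wrt_def by blast

lemma strongly_convex_wrt_monotone:
  assumes "strongly_convex_wrt g gg M mu" and "SPD M"
  shows "mu * sq_normM M (y - x) \<le> (gg y - gg x) \<bullet> (y - x)"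
proof -
  have "mu / 2 * sq_normM M (y - x) \<le> bregman g gg x y"
    and "mu / 2 * sq_normM M (y - x) \<le> bregman g gg y x"
    using assms(1) unfolding strongly_convex_wrt_def normM_power2[OF assms(2)]
    by (metis sq_normM_minus_commute)+
  then show ?thesis
    using bregman_symmetrized[of g gg y x] by linarith
qed

(* compare f at z = y - (1/L) M^-1 (gf y - gf x) with its linearisations at x and at y *)
lemma in_S11_bregman_lower_bound:
  fixes f :: "real^'n \<Rightarrow> real" and M :: "real^'n^'n" and x y :: "real^'n"
  assumes S: "in_S11 f gf M mu L" and "SPD M" and "0 \<le> mu" and "0 < L"
  defines "d \<equiv> gf y - gf x"
  shows "1 / (2 * L) * ((matrix_inv M *v d) \<bullet> d) \<le> bregman f gf y x"
proof -
  define v where "v = matrix_inv M *v d"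
  define z where "z = y - (1 / L) *\<^sub>R v"
  have "0 \<le> mu / 2 * (normM M (x - z))\<^sup>2"
    using \<open>0 \<le> mu\<close> by simp
  also have "\<dots> \<le> bregman f gf z x"
    using S unfolding in_S11_def by blast
  finally have lower: "0 \<le> bregman f gf z x" .
  have "bregman f gf z y \<le> L / 2 * (normM M (y - z))\<^sup>2"
    using S unfolding in_S11_def by blast
  also have "(normM M (y - z))\<^sup>2 = (1 / L)\<^sup>2 * (v \<bullet> d)"
    unfolding normM_power2[OF \<open>SPD M\<close>] z_def sq_normM_def v_def
    by (simp add: matrix_vector_mult_scaleR matrix_vector_mul_assoc invertible_matrix_inv
        SPD_invertible[OF \<open>SPD M\<close>] inner_commute power2_eq_square)
  finally have upper: "bregman f gf z y \<le> 1 / (2 * L) * (v \<bullet> d)"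
    using \<open>0 < L\<close> by (simp add: power2_eq_square field_simps)
  have "gf y \<bullet> v - gf x \<bullet> v = v \<bullet> d"
    unfolding d_def by (simp add: inner_diff_left inner_diff_right inner_commute)
  then have "bregman f gf y x = bregman f gf z x - bregman f gf z y + (1 / L) * (v \<bullet> d)"
    unfolding bregman_def z_def by (simp add: inner_diff_right algebra_simps)
  moreover have "(1 / L) * (v \<bullet> d) = 2 * (1 / (2 * L) * (v \<bullet> d))"
    by simp
  ultimately show ?thesis
    using lower upper unfolding v_def by linarith
qed

lemma in_S11_cocoercive:
  fixes f :: "real^'n \<Rightarrow> real" and M :: "real^'n^'n"
  assumes "in_S11 f gf M mu L" and "SPD M" and "0 \<le> mu" and "0 < L"
  shows "(matrix_inv M *v (gf y - gf x)) \<bullet> (gf y - gf x) \<le> L * ((gf y - gf x) \<bullet> (y - x))"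
proof -
  have "gf x - gf y = (-1) *\<^sub>R (gf y - gf x)"
    by simp
  then have "(matrix_inv M *v (gf x - gf y)) \<bullet> (gf x - gf y)
               = (matrix_inv M *v (gf y - gf x)) \<bullet> (gf y - gf x)"
    by (simp only: matrix_vector_mult_scaleR inner_scaleR_left inner_scaleR_right)
  then have "1 / L * ((matrix_inv M *v (gf y - gf x)) \<bullet> (gf y - gf x)) \<le> (gf y - gf x) \<bullet> (y - x)"
    using in_S11_bregman_lower_bound[OF assms, of x y] in_S11_bregman_lower_bound[OF assms, of y x]
      bregman_symmetrized[of f gf y x] by simp
  then show ?thesis
    using \<open>0 < L\<close> by (simp add: field_simps)
qed

lemma lyap_eq_sq_normM:
  "SPD IV \<Longrightarrow> SPD IQ \<Longrightarrow>
     lyap IV IQ us ps u p = sq_normM IV (u - us) / 2 + sq_normM IQ (p - ps) / 2"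
  unfolding lyap_def by (simp add: normM_power2)

lemma grad_hB_diff:
  "grad_hB gh B IV p - grad_hB gh B IV q
     = (gh p - gh q) + B *v (matrix_inv IV *v (transpose B *v (p - q)))"
  unfolding grad_hB_def matrix_vector_mul_assoc matrix_mul_assoc matrix_vector_mult_diff_distrib
  by simp

lemma hB_strongly_convex_monotone:
  fixes p q :: "real^'n" and B :: "real^'m^'n"
  assumes "strongly_convex_wrt (hB h B IV) (grad_hB gh B IV) IQ muhB" and "SPD IQ"
  defines "w \<equiv> transpose B *v (p - q)"
  shows "muhB * sq_normM IQ (p - q) \<le> (gh p - gh q) \<bullet> (p - q) + (matrix_inv IV *v w) \<bullet> w"
  using strongly_convex_wrt_monotone[OF assms(1,2), where x = q and y = p]
  unfolding grad_hB_diff w_def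
  by (simp add: inner_add_left inner_matrix_vector_transpose)

lemma saddle_pairing_decomposition:
  fixes B :: "real^'m^'n" and u :: "real^'m" and p :: "real^'n"
  assumes saddle1: "gf us + transpose B *v ps = 0" and saddle2: "B *v us = gh ps"
  defines "g \<equiv> gf u - gf us" and "w \<equiv> transpose B *v (p - ps)"
  shows "(gf u + transpose B *v p) \<bullet> (u - us) + (grad_hB gh B IV p - B *v e_map gf IV u) \<bullet> (p - ps)
           = g \<bullet> (u - us) + (gh p - gh ps) \<bullet> (p - ps)
             + (matrix_inv IV *v w) \<bullet> w + (matrix_inv IV *v g) \<bullet> w"
proof -
  let ?Vi = "matrix_inv IV"
  have gf_us: "gf us = - (transpose B *v ps)"
    using saddle1 by (simp add: eq_neg_iff_add_eq_0)
  have u_part: "gf u + transpose B *v p = g + w"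
    unfolding g_def w_def gf_us by (simp add: matrix_vector_mult_diff_distrib)
  have p_part: "grad_hB gh B IV p - B *v e_map gf IV u
                  = (gh p - gh ps) - B *v (u - us) + B *v (?Vi *v w) + B *v (?Vi *v g)"
    unfolding grad_hB_def e_map_def g_def w_def gf_us saddle2[symmetric]
    by (simp add: matrix_vector_mul_assoc[symmetric] matrix_vector_mult_diff_distrib
        matrix_vector_right_distrib algebra_simps)
  have B_adj: "(B *v z) \<bullet> (p - ps) = z \<bullet> w" for z
    unfolding w_def by (rule inner_matrix_vector_transpose)
  show ?thesis
    unfolding u_part p_part inner_add_left inner_diff_left B_adj
    by (simp add: inner_commute inner_diff_right)
qed

lemma saddle_strong_monotonicity:
  fixes B :: "real^'m^'n" and IV :: "real^'m^'m" and IQ :: "real^'n^'n"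
  assumes IV_spd: "SPD IV" and IQ_spd: "SPD IQ"
    and f_S11: "in_S11 f gf IV muf Lf" and "0 \<le> muf" and "0 < Lf" and "Lf \<le> 2"
    and h_convex: "convex_on UNIV h" and h_grad: "is_gradient h gh"
    and hB_sc: "strongly_convex_wrt (hB h B IV) (grad_hB gh B IV) IQ muhB"
    and saddle1: "gf us + transpose B *v ps = 0" and saddle2: "B *v us = gh ps"
  shows "min muf ((2 - Lf) * muhB) * lyap IV IQ us ps u p
           \<le> (gf u + transpose B *v p) \<bullet> (u - us)
              + (grad_hB gh B IV p - B *v e_map gf IV u) \<bullet> (p - ps)"
proof -
  let ?Vi = "matrix_inv IV" and ?\<mu> = "min muf ((2 - Lf) * muhB)"
  define g where "g = gf u - gf us"
  define w where "w = transpose B *v (p - ps)"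
  define X where "X = sq_normM IV (u - us)"
  define Y where "Y = sq_normM IQ (p - ps)"
  let ?gx = "g \<bullet> (u - us)" and ?hy = "(gh p - gh ps) \<bullet> (p - ps)"
  have f_mono: "muf * X \<le> ?gx"
    unfolding X_def g_def
    by (rule strongly_convex_wrt_monotone[OF in_S11_strongly_convex_wrt[OF f_S11] IV_spd])
  have f_cocoercive: "(?Vi *v g) \<bullet> g \<le> Lf * ?gx"
    unfolding g_def by (rule in_S11_cocoercive[OF f_S11 IV_spd \<open>0 \<le> muf\<close> \<open>0 < Lf\<close>])
  have h_mono: "0 \<le> ?hy"
    by (rule convex_gradient_monotone[OF h_convex h_grad])
  have hB_mono: "muhB * Y \<le> ?hy + (?Vi *v w) \<bullet> w"
    unfolding Y_def w_def by (rule hB_strongly_convex_monotone[OF hB_sc IQ_spd])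
  have cross: "- (Lf / 2 * ((?Vi *v w) \<bullet> w)) - 1 / (2 * Lf) * ((?Vi *v g) \<bullet> g) \<le> (?Vi *v g) \<bullet> w"
    using SPD_matrix_inv_Young[OF IV_spd \<open>0 < Lf\<close>, of w g]
      symmetric_matrix_inner_swap[OF SPD_matrix_inv_symmetric[OF IV_spd], of w g]
    by simp
  have "?\<mu> * lyap IV IQ us ps u p = ?\<mu> / 2 * X + ?\<mu> / 2 * Y"
    unfolding lyap_eq_sq_normM[OF IV_spd IQ_spd] X_def Y_def by (simp add: algebra_simps)
  also have "\<dots> \<le> muf / 2 * X + (2 - Lf) * muhB / 2 * Y"
    using sq_normM_nonneg[OF IV_spd] sq_normM_nonneg[OF IQ_spd] unfolding X_def Y_def
    by (intro add_mono mult_right_mono) auto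
  also have "\<dots> = muf / 2 * X + (1 - Lf / 2) * (muhB * Y)"
    by (simp add: field_simps)
  also have "\<dots> \<le> ?gx / 2 + (1 - Lf / 2) * (?hy + (?Vi *v w) \<bullet> w)"
    using f_mono hB_mono \<open>Lf \<le> 2\<close> by (intro add_mono mult_left_mono) auto
  also have "\<dots> \<le> ?gx + ?hy + (?Vi *v w) \<bullet> w + (?Vi *v g) \<bullet> w"
  proof -
    have "1 / (2 * Lf) * ((?Vi *v g) \<bullet> g) \<le> ?gx / 2"
      using f_cocoercive \<open>0 < Lf\<close> by (simp add: field_simps)
    moreover have "0 \<le> Lf / 2 * ?hy"
      using h_mono \<open>0 < Lf\<close> by simp
    moreover have "(1 - Lf / 2) * (?hy + (?Vi *v w) \<bullet> w)
                     = ?hy + (?Vi *v w) \<bullet> w - Lf / 2 * ?hy - Lf / 2 * ((?Vi *v w) \<bullet> w)"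
      by (simp add: algebra_simps)
    ultimately show ?thesis
      using cross by linarith
  qed
  also have "\<dots> = (gf u + transpose B *v p) \<bullet> (u - us)
                    + (grad_hB gh B IV p - B *v e_map gf IV u) \<bullet> (p - ps)"
    unfolding g_def w_def
    by (rule saddle_pairing_decomposition[where gf = gf and gh = gh, OF saddle1 saddle2, symmetric])
  finally show ?thesis .
qed

lemma implicit_step_sq_normM_le:
  fixes M :: "real^'n^'n"
  assumes "SPD M" and step: "x1 = x0 + a *\<^sub>R - (matrix_inv M *v r)"
  shows "sq_normM M (x1 - s) - sq_normM M (x0 - s) \<le> - 2 * a * (r \<bullet> (x1 - s))"
proof -
  have "M *v (x1 - x0) = (- a) *\<^sub>R r"
    using step by (simp add: linear_neg matrix_vector_mult_scaleR matrix_vector_mul_assoc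
        invertible_matrix_inv SPD_invertible[OF assms(1)])
  then have "(M *v (x1 - s)) \<bullet> (x1 - x0) = - a * (r \<bullet> (x1 - s))"
    using symmetric_matrix_inner_swap[OF SPD_symmetric[OF assms(1)], of "x1 - s" "x1 - x0"]
    by simp
  moreover have "sq_normM M (x1 - s) - sq_normM M (x0 - s)
                   = 2 * ((M *v (x1 - s)) \<bullet> (x1 - x0)) - sq_normM M (x1 - x0)"
    using sq_normM_diff[OF SPD_symmetric[OF assms(1)], of "x1 - s" "x0 - s"] by simp
  ultimately show ?thesis
    using sq_normM_nonneg[OF assms(1), of "x1 - x0"] by linarith
qed

(* X, Y: squared distances to the saddle point before (0) and after (1) an implicit step;
   P, Q: pairings of the two residuals with the new distances *)
lemma dissipation_imp_contraction:
  fixes X0 X1 Y0 Y1 P Q a \<mu> :: real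
  assumes "X1 - X0 \<le> - 2 * a * P" and "Y1 - Y0 \<le> - 2 * a * Q"
    and "\<mu> * (X1 / 2 + Y1 / 2) \<le> P + Q" and "0 < a" and "0 \<le> \<mu>"
  shows "X1 / 2 + Y1 / 2 \<le> 1 / (1 + a * \<mu>) * (X0 / 2 + Y0 / 2)"
proof -
  have "a * (\<mu> * (X1 / 2 + Y1 / 2)) \<le> a * (P + Q)"
    using assms(3,4) by simp
  then have "(1 + a * \<mu>) * (X1 / 2 + Y1 / 2) \<le> X0 / 2 + Y0 / 2"
    using assms(1,2) by (simp add: field_simps)
  moreover have "0 < 1 + a * \<mu>"
    using assms(4,5) by (simp add: add_pos_nonneg)
  ultimately show ?thesis
    by (simp add: pos_le_divide_eq mult.commute)
qed

theorem theorem4p1: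
  fixes f :: "real^'m \<Rightarrow> real" and gf :: "real^'m \<Rightarrow> real^'m"
    and h :: "real^'n \<Rightarrow> real" and gh :: "real^'n \<Rightarrow> real^'n"
    and B :: "real^'m^'n" and IV :: "real^'m^'m" and IQ :: "real^'n^'n"
    and us :: "real^'m" and ps :: "real^'n"
    and muf Lf muhB :: real
    and u :: "nat \<Rightarrow> real^'m" and p :: "nat \<Rightarrow> real^'n" and \<alpha> :: "nat \<Rightarrow> real"
  assumes mn: "CARD('n) \<le> CARD('m)"
    and rankB: "rank B = CARD('n)"
    and f_convex: "convex_on UNIV f" and h_convex: "convex_on UNIV h"
    and f_grad: "is_gradient f gf" and h_grad: "is_gradient h gh"
    and gf_cont: "continuous_on UNIV gf" and gh_cont: "continuous_on UNIV gh"
    and gf_lip: "\<exists>L. L-lipschitz_on UNIV gf" and gh_lip: "\<exists>L. L-lipschitz_on UNIV gh"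
    and saddle1: "gf us + transpose B *v ps = 0"
    and saddle2: "B *v us = gh ps"
    and IV_spd: "SPD IV" and IQ_spd: "SPD IQ"
    and f_S11: "in_S11 f gf IV muf Lf"
    and muf_pos: "0 < muf" and muf_Lf: "muf \<le> Lf" and Lf_lt2: "Lf < 2"
    and hB_sc: "strongly_convex_wrt (hB h B IV) (grad_hB gh B IV) IQ muhB"
    and muhB_pos: "0 < muhB"
    and alpha_pos: "\<And>k. 0 < \<alpha> k"
    and step_u: "\<And>k. u (Suc k) = u k + \<alpha> k *\<^sub>R Gu gf B IV (u (Suc k)) (p (Suc k))"
    and step_p: "\<And>k. p (Suc k) = p k + \<alpha> k *\<^sub>R Gp gf gh B IV IQ (u (Suc k)) (p (Suc k))"
  shows "\<forall>k. lyap IV IQ us ps (u (Suc k)) (p (Suc k))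
            \<le> 1 / (1 + \<alpha> k * min muf ((2 - Lf) * muhB)) * lyap IV IQ us ps (u k) (p k)"
proof
  fix k
  have u_step: "sq_normM IV (u (Suc k) - us) - sq_normM IV (u k - us)
                  \<le> - 2 * \<alpha> k * ((gf (u (Suc k)) + transpose B *v p (Suc k)) \<bullet> (u (Suc k) - us))"
    by (rule implicit_step_sq_normM_le[OF IV_spd step_u[unfolded Gu_def]])
  have p_step: "sq_normM IQ (p (Suc k) - ps) - sq_normM IQ (p k - ps)
                  \<le> - 2 * \<alpha> k * ((grad_hB gh B IV (p (Suc k)) - B *v e_map gf IV (u (Suc k)))
                                    \<bullet> (p (Suc k) - ps))"
    by (rule implicit_step_sq_normM_le[OF IQ_spd step_p[unfolded Gp_def]])
  have "min muf ((2 - Lf) * muhB) * lyap IV IQ us ps (u (Suc k)) (p (Suc k))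
          \<le> (gf (u (Suc k)) + transpose B *v p (Suc k)) \<bullet> (u (Suc k) - us)
             + (grad_hB gh B IV (p (Suc k)) - B *v e_map gf IV (u (Suc k))) \<bullet> (p (Suc k) - ps)"
    using muf_pos muf_Lf Lf_lt2
    by (intro saddle_strong_monotonicity[OF IV_spd IQ_spd f_S11 _ _ _ h_convex h_grad hB_sc
          saddle1 saddle2]) auto
  then show "lyap IV IQ us ps (u (Suc k)) (p (Suc k))
               \<le> 1 / (1 + \<alpha> k * min muf ((2 - Lf) * muhB)) * lyap IV IQ us ps (u k) (p k)"
    unfolding lyap_eq_sq_normM[OF IV_spd IQ_spd]
    using dissipation_imp_contraction[OF u_step p_step] alpha_pos[of k] muf_pos muhB_pos Lf_lt2
    by simp
qed

end
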